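(* For every $(a',b',c')\in\mathbb{C}^3$, the formal deformation $(\{\cdot,\cdot\}^{[a',b',c']}_n)_{n\ge0}$ of $\widetilde J$ is modular-isomorphic to one of the following: (1) $(\{\cdot,\cdot\}^{[1,b,c]}_n)_{n\ge0}$ for some $(b,c)\in\mathbb{C}^2$; (2) $(\{\cdot,\cdot\}^{[0,1,c]}_n)_{n\ge0}$ for some $c\in\mathbb{C}$; (3) $(\{\cdot,\cdot\}^{[0,0,c]}_n)_{n\ge0}$ for some $c\in\mathbb{C}$. Moreover, any two distinct deformations in this list (distinct families, or the same family with different parameter values) are not modular-isomorphic.
   Context: Let $\widetilde J=\mathbb{C}[E_4,E_6,A,B]$ be the polynomial algebra in four algebraically independent variables, bigraded by weight and index, where $E_4$ has weight $4$ and index $0$, $E_6$ has weight $6$ and index $0$, $A$ has weight $-2$ and index $1$, $B$ has weight $0$ and index $1$; $\widetilde J_{k,p}$ denotes the homogeneous component of weight $k$ and index $p$. (This is the algebra of weak Jacobi forms of even weight on $\mathrm{SL}(2,\mathbb{Z})$.) For $(a,b)\in\mathbb{C}^2$, $S_{a,b}$ is the derivation of $\widetilde J$ with $S_{a,b}(E_4)=-\tfrac13E_6$, $S_{a,b}(E_6)=-\tfrac12E_4^2$, $S_{a,b}(A)=aB$, $S_{a,b}(B)=bE_4A$. For $c\in\mathbb{C}$ and $n\ge0$, $\{\cdot,\cdot\}^{[a,b,c]}_n$ is the bilinear map on $\widetilde J$ defined on homogeneous $f\in\widetilde J_{k,p}$, $g\in\widetilde J_{\ell,q}$ by $\{f,g\}^{[a,b,c]}_n=\sum_{r=0}^n(-1)^r\binom{k+cp+n-1}{n-r}\binom{\ell+cq+n-1}{r}S_{a,b}^r(f)\,S_{a,b}^{n-r}(g)$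 (complex binomial coefficients $\binom{x}{m}=x(x-1)\cdots(x-m+1)/m!$). Each such sequence is a formal deformation of $\widetilde J$. Two such formal deformations $(\{\cdot,\cdot\}^{[a,b,c]}_n)_n$ and $(\{\cdot,\cdot\}^{[a',b',c']}_n)_n$ are modular-isomorphic if there is a $\mathbb{C}$-linear bijection $\phi:\widetilde J\to\widetilde J$ mapping each $\widetilde J_{k,p}$ into $\widetilde J_{k,p}$ and such that $\phi(\{f,g\}^{[a,b,c]}_j)=\{\phi(f),\phi(g)\}^{[a',b',c']}_j$ for all $j\ge0$ and $f,g\in\widetilde J$. *)

theory Defs
  imports Complex_Main "HOL-Library.Poly_Mapping" "HOL-Library.Product_Plus"
begin

text \<open>Monomials E4^i E6^j A^k B^l are encoded by exponent vectors (i,j,k,l);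
  the polynomial algebra C[E4,E6,A,B] is the type of finitely supported
  maps from monomials to complex coefficients, with convolution product.\<close>

type_synonym mono = "nat \<times> nat \<times> nat \<times> nat"
type_synonym jpoly = "mono \<Rightarrow>\<^sub>0 complex"

definition mono_wt :: "mono \<Rightarrow> int" where
  "mono_wt m = (case m of (i,j,k,l) \<Rightarrow> 4 * int i + 6 * int j - 2 * int k)"

definition mono_ind :: "mono \<Rightarrow> int" where
  "mono_ind m = (case m of (i,j,k,l) \<Rightarrow> int k + int l)"

definition cst :: "complex \<Rightarrow> jpoly" where
  "cst c = Poly_Mapping.single (0,0,0,0) c"

definition E4 :: jpoly where "E4 = Poly_Mapping.single (1,0,0,0) 1"
definition E6 :: jpoly where "E6 = Poly_Mapping.single (0,1,0,0) 1"
definition vA :: jpoly where "vA = Poly_Mapping.single (0,0,1,0) 1"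
definition vB :: jpoly where "vB = Poly_Mapping.single (0,0,0,1) 1"

definition homog :: "int \<Rightarrow> int \<Rightarrow> jpoly \<Rightarrow> bool" where
  "homog k p f \<longleftrightarrow> (\<forall>m \<in> Poly_Mapping.keys f. mono_wt m = k \<and> mono_ind m = p)"

definition comp :: "int \<Rightarrow> int \<Rightarrow> jpoly \<Rightarrow> jpoly" where
  "comp k p f = (\<Sum>m \<in> {m \<in> Poly_Mapping.keys f. mono_wt m = k \<and> mono_ind m = p}.
                    Poly_Mapping.single m (Poly_Mapping.lookup f m))"

definition bidegs :: "jpoly \<Rightarrow> (int \<times> int) set" where
  "bidegs f = (\<lambda>m. (mono_wt m, mono_ind m)) ` Poly_Mapping.keys f"

definition pdE4 :: "jpoly \<Rightarrow> jpoly" where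
  "pdE4 f = (\<Sum>m \<in> Poly_Mapping.keys f. case m of (i,j,k,l) \<Rightarrow>
              Poly_Mapping.single (i - 1, j, k, l) (of_nat i * Poly_Mapping.lookup f m))"
definition pdE6 :: "jpoly \<Rightarrow> jpoly" where
  "pdE6 f = (\<Sum>m \<in> Poly_Mapping.keys f. case m of (i,j,k,l) \<Rightarrow>
              Poly_Mapping.single (i, j - 1, k, l) (of_nat j * Poly_Mapping.lookup f m))"
definition pdA :: "jpoly \<Rightarrow> jpoly" where
  "pdA f = (\<Sum>m \<in> Poly_Mapping.keys f. case m of (i,j,k,l) \<Rightarrow>
              Poly_Mapping.single (i, j, k - 1, l) (of_nat k * Poly_Mapping.lookup f m))"
definition pdB :: "jpoly \<Rightarrow> jpoly" where
  "pdB f = (\<Sum>m \<in> Poly_Mapping.keys f. case m of (i,j,k,l) \<Rightarrow>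
              Poly_Mapping.single (i, j, k, l - 1) (of_nat l * Poly_Mapping.lookup f m))"

definition Sder :: "complex \<Rightarrow> complex \<Rightarrow> jpoly \<Rightarrow> jpoly" where
  "Sder a b f = pdE4 f * (cst (-1/3) * E6) + pdE6 f * (cst (-1/2) * E4 ^ 2)
              + pdA f * (cst a * vB) + pdB f * (cst b * E4 * vA)"

definition bracket_h :: "complex \<Rightarrow> complex \<Rightarrow> complex \<Rightarrow> nat \<Rightarrow>
    int \<Rightarrow> int \<Rightarrow> int \<Rightarrow> int \<Rightarrow> jpoly \<Rightarrow> jpoly \<Rightarrow> jpoly" where
  "bracket_h a b c n k p l q f g =
     (\<Sum>r = 0..n. cst ((-1) ^ r
          * ((of_int k + c * of_int p + of_nat n - 1) gchoose (n - r))
          * ((of_int l + c * of_int q + of_nat n - 1) gchoose r))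
        * (((Sder a b) ^^ r) f * ((Sder a b) ^^ (n - r)) g))"

definition bracket :: "complex \<Rightarrow> complex \<Rightarrow> complex \<Rightarrow> nat \<Rightarrow> jpoly \<Rightarrow> jpoly \<Rightarrow> jpoly" where
  "bracket a b c n f g =
     (\<Sum>(k,p) \<in> bidegs f. \<Sum>(l,q) \<in> bidegs g.
        bracket_h a b c n k p l q (comp k p f) (comp l q g))"

definition modular_iso :: "complex \<times> complex \<times> complex \<Rightarrow> complex \<times> complex \<times> complex \<Rightarrow> bool" where
  "modular_iso t t' = (case t of (a,b,c) \<Rightarrow> case t' of (a',b',c') \<Rightarrow>
     (\<exists>\<phi> :: jpoly \<Rightarrow> jpoly.
        bij \<phi>
      \<and> (\<forall>f g. \<phi> (f + g) = \<phi> f + \<phi> g)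
      \<and> (\<forall>z f. \<phi> (cst z * f) = cst z * \<phi> f)
      \<and> (\<forall>k p f. homog k p f \<longrightarrow> homog k p (\<phi> f))
      \<and> (\<forall>j f g. \<phi> (bracket a b c j f g) = bracket a' b' c' j (\<phi> f) (\<phi> g))))"

definition canonical_list :: "(complex \<times> complex \<times> complex) set" where
  "canonical_list = {(1, b, c) | b c. True} \<union> {(0, 1, c) | c. True} \<union> {(0, 0, c) | c. True}"

end

theory Submission
  imports Defs
begin

text \<open>Rescaling the generator B by \<beta> \<noteq> 0 is an automorphism preserving weight and index
  which conjugates S_{a,b} into S_{a \<beta>, b / \<beta>}; it brings (a, b) to one of the three
  normal forms without changing c. Conversely, a modular isomorphism maps each of the
  one-dimensional spaces spanned by 1, E4, E6, A, B into itself, and since the bracket of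
  order 0 is the product it acts on every monomial E4^i E6^j A^k B^l by a character
  x^i y^j z^k w^l. Comparing coefficients in the order-1 brackets of E4 with E6, A and B
  forces x = y = 1, c = c', a w = a' z and b z = b' w, which separates the normal forms.\<close>

lemma zero_mono: "(0::mono) = (0,0,0,0)"
  by (simp add: zero_prod_def)

lemma sum_single_lookup:
  "(\<Sum>m\<in>Poly_Mapping.keys f. Poly_Mapping.single m (Poly_Mapping.lookup f m)) = f"
  by (rule poly_mapping_eqI)
     (auto simp: lookup_sum lookup_single when_def in_keys_iff)

lemma single_eq_zero_iff [simp]: "Poly_Mapping.single m v = 0 \<longleftrightarrow> v = 0"
  by (metis lookup_single_eq lookup_zero single_zero)

lemma cst_mult_single: "cst z * Poly_Mapping.single m v = Poly_Mapping.single m (z * v)"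
  by (simp add: cst_def mult_single zero_mono[symmetric])

lemma cst_mult_cst: "cst x * cst y = cst (x * y)"
  by (simp add: cst_def mult_single)

lemma cst_uminus_mult: "cst (- x) * f = - (cst x * f)"
  by (simp add: cst_def single_uminus)

subsection \<open>Diagonal rescaling of monomials\<close>

definition mono_char :: "complex \<Rightarrow> complex \<Rightarrow> complex \<Rightarrow> complex \<Rightarrow> mono \<Rightarrow> complex" where
  "mono_char x y z w m = (case m of (i,j,k,l) \<Rightarrow> x ^ i * y ^ j * z ^ k * w ^ l)"

lemma mono_char_add: "mono_char x y z w (m + n) = mono_char x y z w m * mono_char x y z w n"
  by (cases m; cases n) (simp add: mono_char_def power_add)

lemma mono_char_nonzero: "x \<noteq> 0 \<Longrightarrow> y \<noteq> 0 \<Longrightarrow> z \<noteq> 0 \<Longrightarrow> w \<noteq> 0 \<Longrightarrow> mono_char x y z w m \<noteq> 0"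
  by (cases m) (simp add: mono_char_def)

definition scale_monomials :: "(mono \<Rightarrow> complex) \<Rightarrow> jpoly \<Rightarrow> jpoly" where
  "scale_monomials \<chi> f = Poly_Mapping.mapp (\<lambda>m v. \<chi> m * v) f"

lemma lookup_scale_monomials:
  "Poly_Mapping.lookup (scale_monomials \<chi> f) m = \<chi> m * Poly_Mapping.lookup f m"
  by (auto simp: scale_monomials_def lookup_mapp when_def in_keys_iff)

lemma scale_monomials_add: "scale_monomials \<chi> (f + g) = scale_monomials \<chi> f + scale_monomials \<chi> g"
  by (rule poly_mapping_eqI) (simp add: lookup_scale_monomials lookup_add algebra_simps)

lemma scale_monomials_zero [simp]: "scale_monomials \<chi> 0 = 0"
  by (rule poly_mapping_eqI) (simp add: lookup_scale_monomials)

lemma scale_monomials_sum: "scale_monomials \<chi> (sum F S) = (\<Sum>x\<in>S. scale_monomials \<chi> (F x))"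
  by (induction S rule: infinite_finite_induct) (simp_all add: scale_monomials_add)

lemma scale_monomials_single:
  "scale_monomials \<chi> (Poly_Mapping.single m v) = Poly_Mapping.single m (\<chi> m * v)"
  by (rule poly_mapping_eqI) (simp add: lookup_scale_monomials lookup_single when_def)

lemma keys_scale_monomials:
  "(\<And>m. \<chi> m \<noteq> 0) \<Longrightarrow> Poly_Mapping.keys (scale_monomials \<chi> f) = Poly_Mapping.keys f"
  by (auto simp: in_keys_iff lookup_scale_monomials)

lemma scale_monomials_inverse:
  "(\<And>m. \<psi> m * \<chi> m = 1) \<Longrightarrow> scale_monomials \<psi> (scale_monomials \<chi> f) = f"
  by (rule poly_mapping_eqI) (simp add: lookup_scale_monomials mult.assoc[symmetric])

lemma update_eq_add_single:
  "m \<notin> Poly_Mapping.keys f \<Longrightarrow> Poly_Mapping.update m v f = f + Poly_Mapping.single m v"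
  by (rule poly_mapping_eqI)
     (auto simp: lookup_update lookup_add lookup_single when_def in_keys_iff)

lemma scale_monomials_mult:
  assumes char: "\<And>m n. \<chi> (m + n) = \<chi> m * \<chi> n"
  shows "scale_monomials \<chi> (f * g) = scale_monomials \<chi> f * scale_monomials \<chi> g"
proof -
  have single_mult: "scale_monomials \<chi> (Poly_Mapping.single m v * g)
      = scale_monomials \<chi> (Poly_Mapping.single m v) * scale_monomials \<chi> g" for m v g
  proof (induction g rule: update_induct)
    case (update g n u)
    then show ?case
      by (simp add: update_eq_add_single distrib_left scale_monomials_add scale_monomials_single
          mult_single char mult_ac)
  qed simp
  show ?thesis
  proof (induction f rule: update_induct)
    case (update f m v)
    then show ?case
      by (simp add: update_eq_add_single distrib_right scale_monomials_add single_mult)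
  qed simp
qed

definition scale_B :: "complex \<Rightarrow> jpoly \<Rightarrow> jpoly" where
  "scale_B \<beta> = scale_monomials (mono_char 1 1 1 \<beta>)"

lemma scale_B_single:
  "scale_B \<beta> (Poly_Mapping.single (i,j,k,l) v) = Poly_Mapping.single (i,j,k,l) (\<beta> ^ l * v)"
  by (simp add: scale_B_def scale_monomials_single mono_char_def)

lemma keys_scale_B: "\<beta> \<noteq> 0 \<Longrightarrow> Poly_Mapping.keys (scale_B \<beta> f) = Poly_Mapping.keys f"
  by (simp add: scale_B_def keys_scale_monomials mono_char_nonzero)

lemma scale_B_add: "scale_B \<beta> (f + g) = scale_B \<beta> f + scale_B \<beta> g"
  by (simp add: scale_B_def scale_monomials_add)

lemma scale_B_sum: "scale_B \<beta> (sum F S) = (\<Sum>x\<in>S. scale_B \<beta> (F x))"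
  by (simp add: scale_B_def scale_monomials_sum)

lemma scale_B_cst: "scale_B \<beta> (cst z) = cst z"
  by (simp add: cst_def scale_B_single)

lemma scale_B_mult: "scale_B \<beta> (f * g) = scale_B \<beta> f * scale_B \<beta> g"
  by (simp add: scale_B_def scale_monomials_mult mono_char_add)

lemma scale_B_inverse: "\<beta> \<noteq> 0 \<Longrightarrow> scale_B \<beta> (scale_B (1/\<beta>) f) = f"
  unfolding scale_B_def
  by (rule scale_monomials_inverse) (simp add: mono_char_def power_divide split: prod.split)

lemma bij_scale_B: "\<beta> \<noteq> 0 \<Longrightarrow> bij (scale_B \<beta>)"
  by (rule o_bij[where g = "scale_B (1/\<beta>)"])
     (auto simp: fun_eq_iff scale_B_inverse scale_B_inverse[of "1/\<beta>", simplified])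

lemma homog_scale_B: "\<beta> \<noteq> 0 \<Longrightarrow> homog k p (scale_B \<beta> f) \<longleftrightarrow> homog k p f"
  by (simp add: homog_def keys_scale_B)

lemma comp_scale_B: "\<beta> \<noteq> 0 \<Longrightarrow> comp k p (scale_B \<beta> f) = scale_B \<beta> (comp k p f)"
  unfolding comp_def scale_B_def scale_monomials_sum
  by (rule sum.cong)
     (auto simp: keys_scale_B[unfolded scale_B_def] lookup_scale_monomials scale_monomials_single)

lemma bidegs_scale_B: "\<beta> \<noteq> 0 \<Longrightarrow> bidegs (scale_B \<beta> f) = bidegs f"
  by (simp add: bidegs_def keys_scale_B)

lemma pdE4_scale_B: "\<beta> \<noteq> 0 \<Longrightarrow> pdE4 (scale_B \<beta> f) = scale_B \<beta> (pdE4 f)"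
  unfolding pdE4_def scale_B_def scale_monomials_sum
  by (rule sum.cong) (auto simp: keys_scale_B[unfolded scale_B_def] lookup_scale_monomials
      scale_monomials_single mono_char_def mult_ac split: prod.split)

lemma pdE6_scale_B: "\<beta> \<noteq> 0 \<Longrightarrow> pdE6 (scale_B \<beta> f) = scale_B \<beta> (pdE6 f)"
  unfolding pdE6_def scale_B_def scale_monomials_sum
  by (rule sum.cong) (auto simp: keys_scale_B[unfolded scale_B_def] lookup_scale_monomials
      scale_monomials_single mono_char_def mult_ac split: prod.split)

lemma pdA_scale_B: "\<beta> \<noteq> 0 \<Longrightarrow> pdA (scale_B \<beta> f) = scale_B \<beta> (pdA f)"
  unfolding pdA_def scale_B_def scale_monomials_sum
  by (rule sum.cong) (auto simp: keys_scale_B[unfolded scale_B_def] lookup_scale_monomials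
      scale_monomials_single mono_char_def mult_ac split: prod.split)

lemma pdB_scale_B: "\<beta> \<noteq> 0 \<Longrightarrow> pdB (scale_B \<beta> f) = cst \<beta> * scale_B \<beta> (pdB f)"
  unfolding pdB_def scale_B_def scale_monomials_sum sum_distrib_left
proof (rule sum.cong)
  fix m :: mono
  obtain i j k l where m: "m = (i,j,k,l)" by (cases m)
  show "(case m of (i,j,k,l) \<Rightarrow> Poly_Mapping.single (i,j,k,l - 1)
           (of_nat l * Poly_Mapping.lookup (scale_monomials (mono_char 1 1 1 \<beta>) f) m))
      = cst \<beta> * scale_monomials (mono_char 1 1 1 \<beta>) (case m of (i,j,k,l) \<Rightarrow>
           Poly_Mapping.single (i,j,k,l - 1) (of_nat l * Poly_Mapping.lookup f m))"
    by (cases l) (simp_all add: m lookup_scale_monomials scale_monomials_single mono_char_def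
        cst_mult_single mult_ac)
qed (simp add: keys_scale_B[unfolded scale_B_def])

lemma scale_B_E4: "scale_B \<beta> E4 = E4" and scale_B_E6: "scale_B \<beta> E6 = E6"
  and scale_B_vA: "scale_B \<beta> vA = vA" and scale_B_vB: "scale_B \<beta> vB = cst \<beta> * vB"
  by (simp_all add: E4_def E6_def vA_def vB_def scale_B_single cst_mult_single)

lemma Sder_scale_B:
  assumes "\<beta> \<noteq> 0"
  shows "Sder (a * \<beta>) (b / \<beta>) (scale_B \<beta> f) = scale_B \<beta> (Sder a b f)"
proof -
  have "cst (a * \<beta>) = cst a * cst \<beta>" "cst b = cst \<beta> * cst (b / \<beta>)"
    using assms by (simp_all add: cst_mult_cst)
  then show ?thesis
    unfolding Sder_def scale_B_add scale_B_mult scale_B_cst power2_eq_square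
      pdE4_scale_B[OF assms] pdE6_scale_B[OF assms] pdA_scale_B[OF assms] pdB_scale_B[OF assms]
      scale_B_E4 scale_B_E6 scale_B_vA scale_B_vB
    by (simp add: mult_ac)
qed

lemma bracket_scale_B:
  assumes "\<beta> \<noteq> 0"
  shows "scale_B \<beta> (bracket a b c n f g) = bracket (a * \<beta>) (b / \<beta>) c n (scale_B \<beta> f) (scale_B \<beta> g)"
proof -
  have "(Sder (a * \<beta>) (b / \<beta>) ^^ r) (scale_B \<beta> h) = scale_B \<beta> ((Sder a b ^^ r) h)" for r h
    by (induction r) (simp_all add: Sder_scale_B[OF assms])
  then show ?thesis
    unfolding bracket_def bidegs_scale_B[OF assms] comp_scale_B[OF assms] scale_B_sum
    by (auto intro!: sum.cong simp: bracket_h_def scale_B_sum scale_B_mult scale_B_cst)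
qed

lemma modular_iso_scale_B:
  assumes "\<beta> \<noteq> 0"
  shows "modular_iso (a, b, c) (a * \<beta>, b / \<beta>, c)"
  unfolding modular_iso_def
  using assms bij_scale_B scale_B_add scale_B_mult scale_B_cst homog_scale_B bracket_scale_B
  by (auto intro!: exI[of _ "scale_B \<beta>"])

lemma homog_single: "homog (mono_wt m) (mono_ind m) (Poly_Mapping.single m v)"
  by (simp add: homog_def)

lemma comp_homog: "homog k p f \<Longrightarrow> comp k p f = f"
  unfolding comp_def homog_def
  by (subst (2) sum_single_lookup[symmetric]) (rule sum.cong, auto)

lemma bidegs_homog: "homog k p f \<Longrightarrow> f \<noteq> 0 \<Longrightarrow> bidegs f = {(k, p)}"
  using keys_eq_empty[of f] by (fastforce simp: bidegs_def homog_def)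

lemma bracket_homog:
  "homog k p f \<Longrightarrow> f \<noteq> 0 \<Longrightarrow> homog l q g \<Longrightarrow> g \<noteq> 0 \<Longrightarrow>
   bracket a b c n f g = bracket_h a b c n k p l q f g"
  by (simp add: bracket_def bidegs_homog comp_homog)

lemma bracket_h_0: "bracket_h a b c 0 k p l q f g = f * g"
  by (simp add: bracket_h_def cst_def zero_mono[symmetric])

lemma bracket_h_1:
  "bracket_h a b c 1 k p l q f g =
     cst (of_int k + c * of_int p) * (f * Sder a b g) - cst (of_int l + c * of_int q) * (Sder a b f * g)"
proof -
  have "{0..1::nat} = {0, 1}" by auto
  then show ?thesis
    by (simp add: bracket_h_def cst_uminus_mult[symmetric])
qed

lemma pdE4_single: "pdE4 (Poly_Mapping.single (i,j,k,l) v) = Poly_Mapping.single (i - 1,j,k,l) (of_nat i * v)"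
  by (cases "v = 0") (simp_all add: pdE4_def)

lemma pdE6_single: "pdE6 (Poly_Mapping.single (i,j,k,l) v) = Poly_Mapping.single (i,j - 1,k,l) (of_nat j * v)"
  by (cases "v = 0") (simp_all add: pdE6_def)

lemma pdA_single: "pdA (Poly_Mapping.single (i,j,k,l) v) = Poly_Mapping.single (i,j,k - 1,l) (of_nat k * v)"
  by (cases "v = 0") (simp_all add: pdA_def)

lemma pdB_single: "pdB (Poly_Mapping.single (i,j,k,l) v) = Poly_Mapping.single (i,j,k,l - 1) (of_nat l * v)"
  by (cases "v = 0") (simp_all add: pdB_def)

lemma Sder_single:
  "Sder a b (Poly_Mapping.single (i,j,k,l) v) =
     Poly_Mapping.single (i - 1, j + 1, k, l) (- of_nat i * v / 3)
   + Poly_Mapping.single (i + 2, j - 1, k, l) (- of_nat j * v / 2)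
   + Poly_Mapping.single (i, j, k - 1, l + 1) (a * of_nat k * v)
   + Poly_Mapping.single (i + 1, j, k + 1, l - 1) (b * of_nat l * v)"
  by (simp add: Sder_def pdE4_single pdE6_single pdA_single pdB_single cst_def E4_def E6_def
      vA_def vB_def power2_eq_square mult_single mult_ac)

lemma bracket_1_single:
  assumes "v \<noteq> 0" "w \<noteq> 0"
  shows "bracket a b c 1 (Poly_Mapping.single m v) (Poly_Mapping.single n w) =
      cst (of_int (mono_wt m) + c * of_int (mono_ind m))
        * (Poly_Mapping.single m v * Sder a b (Poly_Mapping.single n w))
    - cst (of_int (mono_wt n) + c * of_int (mono_ind n))
        * (Sder a b (Poly_Mapping.single m v) * Poly_Mapping.single n w)"
proof -
  have "bracket a b c 1 (Poly_Mapping.single m v) (Poly_Mapping.single n w) =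
      bracket_h a b c 1 (mono_wt m) (mono_ind m) (mono_wt n) (mono_ind n)
        (Poly_Mapping.single m v) (Poly_Mapping.single n w)"
    using assms by (intro bracket_homog homog_single) simp_all
  then show ?thesis by (simp only: bracket_h_1)
qed

subsection \<open>Modular isomorphisms act diagonally\<close>

lemma bidegree_unique:
  assumes "m0 \<in> {(0,0,0,0), (1,0,0,0), (0,1,0,0), (0,0,1,0), (0,0,0,1)}"
    and "mono_wt m = mono_wt m0" and "mono_ind m = mono_ind m0"
  shows "m = m0"
  using assms by (cases m) (auto simp: mono_wt_def mono_ind_def; presburger)

lemma homog_one_dimensional:
  assumes "m0 \<in> {(0,0,0,0), (1,0,0,0), (0,1,0,0), (0,0,1,0), (0,0,0,1)}"
    and "homog (mono_wt m0) (mono_ind m0) F"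
  shows "F = Poly_Mapping.single m0 (Poly_Mapping.lookup F m0)"
proof (rule poly_mapping_eqI)
  fix m
  have "m \<in> Poly_Mapping.keys F \<Longrightarrow> m = m0"
    using assms by (auto simp: homog_def intro: bidegree_unique)
  then show "Poly_Mapping.lookup F m = Poly_Mapping.lookup (Poly_Mapping.single m0 (Poly_Mapping.lookup F m0)) m"
    by (auto simp: lookup_single when_def in_keys_iff)
qed

lemma multiplicative_eq_mono_char:
  fixes P :: "mono \<Rightarrow> jpoly"
  assumes mult: "\<And>m n. P (m + n) = P m * P n" and "P 0 = 1"
    and "P (1,0,0,0) = Poly_Mapping.single (1,0,0,0) x" "P (0,1,0,0) = Poly_Mapping.single (0,1,0,0) y"
    and "P (0,0,1,0) = Poly_Mapping.single (0,0,1,0) z" "P (0,0,0,1) = Poly_Mapping.single (0,0,0,1) w"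
  shows "P m = Poly_Mapping.single m (mono_char x y z w m)"
proof -
  have step: "P (e + n) = Poly_Mapping.single (e + n) (t * u)"
    if "P e = Poly_Mapping.single e t" "P n = Poly_Mapping.single n u" for e n t u
    using that by (simp add: mult mult_single)
  have B_part: "P (0,0,0,l) = Poly_Mapping.single (0,0,0,l) (w ^ l)" for l
  proof (induction l)
    case (Suc l)
    then show ?case using step[OF assms(6) Suc] by simp
  qed (simp add: assms(2) zero_mono[symmetric])
  have AB_part: "P (0,0,k,l) = Poly_Mapping.single (0,0,k,l) (z ^ k * w ^ l)" for k l
  proof (induction k)
    case (Suc k)
    then show ?case using step[OF assms(5) Suc] by (simp add: mult_ac)
  qed (simp add: B_part)
  have E6AB_part: "P (0,j,k,l) = Poly_Mapping.single (0,j,k,l) (y ^ j * z ^ k * w ^ l)" for j k l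
  proof (induction j)
    case (Suc j)
    then show ?case using step[OF assms(4) Suc] by (simp add: mult_ac)
  qed (simp add: AB_part)
  have "P (i,j,k,l) = Poly_Mapping.single (i,j,k,l) (x ^ i * y ^ j * z ^ k * w ^ l)" for i j k l
  proof (induction i)
    case (Suc i)
    then show ?case using step[OF assms(3) Suc] by (simp add: mult_ac)
  qed (simp add: E6AB_part)
  then show ?thesis
    by (cases m) (simp add: mono_char_def)
qed

lemma additive_eq_scale_monomials:
  assumes add: "\<And>f g. \<phi> (f + g) = \<phi> f + \<phi> g"
    and single: "\<And>m v. \<phi> (Poly_Mapping.single m v) = Poly_Mapping.single m (\<chi> m * v)"
  shows "\<phi> f = scale_monomials \<chi> f"
proof -
  have "\<phi> 0 = 0"
    using add[of 0 0] by simp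
  then have sum: "\<phi> (sum F S) = (\<Sum>x\<in>S. \<phi> (F x))" for F and S :: "'a set"
    by (induction S rule: infinite_finite_induct) (simp_all add: add)
  have "\<phi> f = (\<Sum>m\<in>Poly_Mapping.keys f. Poly_Mapping.single m (\<chi> m * Poly_Mapping.lookup f m))"
    by (subst sum_single_lookup[symmetric]) (simp only: sum single)
  also have "\<dots> = scale_monomials \<chi> f"
    by (subst (2) sum_single_lookup[symmetric]) (simp add: scale_monomials_sum scale_monomials_single)
  finally show ?thesis .
qed

lemma modular_iso_diagonal:
  assumes "modular_iso (a, b, c) (a', b', c')"
  obtains x y z w where "x \<noteq> 0" "y \<noteq> 0" "z \<noteq> 0" "w \<noteq> 0"
    and "\<And>j f g. scale_monomials (mono_char x y z w) (bracket a b c j f g)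
           = bracket a' b' c' j (scale_monomials (mono_char x y z w) f)
               (scale_monomials (mono_char x y z w) g)"
proof -
  from assms obtain \<phi> where "bij \<phi>" and add: "\<And>f g. \<phi> (f + g) = \<phi> f + \<phi> g"
    and scal: "\<And>z f. \<phi> (cst z * f) = cst z * \<phi> f"
    and hom: "\<And>k p f. homog k p f \<Longrightarrow> homog k p (\<phi> f)"
    and br: "\<And>j f g. \<phi> (bracket a b c j f g) = bracket a' b' c' j (\<phi> f) (\<phi> g)"
    unfolding modular_iso_def by auto
  have "\<phi> 0 = 0"
    using add[of 0 0] by simp
  then have nonzero: "\<phi> f \<noteq> 0" if "f \<noteq> 0" for f
    using \<open>bij \<phi>\<close> that by (metis bij_is_inj injD)
  define P where "P m = \<phi> (Poly_Mapping.single m 1)" for m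
  have \<phi>_single: "\<phi> (Poly_Mapping.single m v) = cst v * P m" for m v
    using scal[of v "Poly_Mapping.single m 1"] by (simp add: P_def cst_mult_single)
  have P_homog: "homog (mono_wt m) (mono_ind m) (P m)" for m
    unfolding P_def by (intro hom homog_single)
  have P_nonzero: "P m \<noteq> 0" for m
    unfolding P_def by (simp add: nonzero)
  have P_mult: "P (m + n) = P m * P n" for m n
    using br[of 0 "Poly_Mapping.single m 1" "Poly_Mapping.single n 1"]
    by (simp add: P_def[symmetric] bracket_homog[OF homog_single _ homog_single]
        bracket_homog[OF P_homog _ P_homog] P_nonzero bracket_h_0 mult_single)
  have P_generator: "\<exists>t. t \<noteq> 0 \<and> P m0 = Poly_Mapping.single m0 t"
    if "m0 \<in> {(0,0,0,0), (1,0,0,0), (0,1,0,0), (0,0,1,0), (0,0,0,1)}" for m0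
    using homog_one_dimensional[OF that P_homog] P_nonzero[of m0] by (metis single_zero)
  obtain x y z w where nz: "x \<noteq> 0" "y \<noteq> 0" "z \<noteq> 0" "w \<noteq> 0"
    and gen: "P (1,0,0,0) = Poly_Mapping.single (1,0,0,0) x" "P (0,1,0,0) = Poly_Mapping.single (0,1,0,0) y"
      "P (0,0,1,0) = Poly_Mapping.single (0,0,1,0) z" "P (0,0,0,1) = Poly_Mapping.single (0,0,0,1) w"
    using P_generator by (metis insertCI)
  obtain t where "t \<noteq> 0" and P0: "P 0 = Poly_Mapping.single 0 t"
    using P_generator[of "(0,0,0,0)"] by (auto simp: zero_mono)
  have "P 0 = P 0 * P 0"
    using P_mult[of 0 0] by simp
  then have "t * t = t"
    by (metis P0 lookup_single_eq mult_single add_0)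
  with \<open>t \<noteq> 0\<close> have "P 0 = 1"
    by (simp add: P0)
  have "\<phi> f = scale_monomials (mono_char x y z w) f" for f
  proof (rule additive_eq_scale_monomials[OF add])
    show "\<phi> (Poly_Mapping.single m v) = Poly_Mapping.single m (mono_char x y z w m * v)" for m v
      using multiplicative_eq_mono_char[OF P_mult \<open>P 0 = 1\<close> gen]
      by (simp add: \<phi>_single cst_mult_single mult.commute)
  qed
  then show ?thesis
    using that nz br by simp
qed

lemma modular_iso_invariants:
  assumes "modular_iso (a, b, c) (a', b', c')"
  obtains z w where "z \<noteq> 0" "w \<noteq> 0" "c = c'" "a * w = a' * z" "b * z = b' * w"
proof -
  obtain x y z w where nz: "x \<noteq> 0" "y \<noteq> 0" "z \<noteq> 0" "w \<noteq> 0"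
    and br: "\<And>j f g. scale_monomials (mono_char x y z w) (bracket a b c j f g)
           = bracket a' b' c' j (scale_monomials (mono_char x y z w) f)
               (scale_monomials (mono_char x y z w) g)"
    using modular_iso_diagonal[OF assms] by blast
  have coeff: "mono_char x y z w r
        * Poly_Mapping.lookup (bracket a b c 1 (Poly_Mapping.single m 1) (Poly_Mapping.single n 1)) r
      = Poly_Mapping.lookup (bracket a' b' c' 1 (Poly_Mapping.single m (mono_char x y z w m))
          (Poly_Mapping.single n (mono_char x y z w n))) r" for m n r
    using arg_cong[OF br[of 1 "Poly_Mapping.single m 1" "Poly_Mapping.single n 1"],
        of "\<lambda>F. Poly_Mapping.lookup F r"]
    by (simp add: lookup_scale_monomials scale_monomials_single)
  text \<open>{E4,E6}_1 = 2 E6^2 - 2 E4^3, {E4,A}_1 = 4a E4 B + (c - 2)/3 E6 A and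
    {E4,B}_1 = 4b E4^2 A + c/3 E6 B; their coefficients give the equations below.\<close>
  note compute = bracket_1_single nz Sder_single mono_char_def mono_wt_def mono_ind_def
    cst_mult_single mult_single lookup_add lookup_minus lookup_single when_def
  have "x ^ 3 = x * y"
    using coeff[of "(3,0,0,0)" "(1,0,0,0)" "(0,1,0,0)"] by (simp add: compute del: One_nat_def)
  moreover have "y ^ 2 = x * y"
    using coeff[of "(0,2,0,0)" "(1,0,0,0)" "(0,1,0,0)"] by (simp add: compute del: One_nat_def)
  ultimately have "x = 1" "y = 1"
    using nz(1,2) by (auto simp: power2_eq_square power3_eq_cube)
  then have "c = c'"
    using coeff[of "(0,1,1,0)" "(1,0,0,0)" "(0,0,1,0)"] by (simp add: compute del: One_nat_def)
  moreover have "a * w = a' * z"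
    using coeff[of "(1,0,0,1)" "(1,0,0,0)" "(0,0,1,0)"]
    by (simp add: compute mult.commute del: One_nat_def)
  moreover have "b * z = b' * w"
    using coeff[of "(2,0,1,0)" "(1,0,0,0)" "(0,0,0,1)"] \<open>x = 1\<close>
    by (simp add: compute mult.commute del: One_nat_def)
  ultimately show thesis
    using that nz(3,4) by blast
qed

lemma canonical_list_unique:
  assumes "z \<noteq> 0" "w \<noteq> 0" "a * w = a' * z" "b * z = b' * w"
    and "(a, b, c) \<in> canonical_list" "(a', b', c) \<in> canonical_list"
  shows "a = a'" "b = b'"
  using assms by (auto simp: canonical_list_def)

theorem mainTheorem2:
  shows "(\<forall>a' b' c' :: complex.
            (\<exists>b c. modular_iso (a', b', c') (1, b, c))
          \<or> (\<exists>c. modular_iso (a', b', c') (0, 1, c))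
          \<or> (\<exists>c. modular_iso (a', b', c') (0, 0, c)))
       \<and> (\<forall>t \<in> canonical_list. \<forall>t' \<in> canonical_list. t \<noteq> t' \<longrightarrow> \<not> modular_iso t t')"
proof (intro conjI allI ballI impI notI)
  fix a' b' c' :: complex
  consider "a' \<noteq> 0" | "a' = 0" "b' \<noteq> 0" | "a' = 0" "b' = 0"
    by blast
  then show "(\<exists>b c. modular_iso (a', b', c') (1, b, c))
          \<or> (\<exists>c. modular_iso (a', b', c') (0, 1, c))
          \<or> (\<exists>c. modular_iso (a', b', c') (0, 0, c))"
  proof cases
    case 1
    then show ?thesis using modular_iso_scale_B[of "1 / a'" a' b' c'] by auto
  next
    case 2
    then show ?thesis using modular_iso_scale_B[of b' a' b' c'] by auto
  next
    case 3
    then show ?thesis using modular_iso_scale_B[of 1 a' b' c'] by auto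
  qed
next
  fix t t' assume t: "t \<in> canonical_list" and t': "t' \<in> canonical_list"
    and "t \<noteq> t'" and iso: "modular_iso t t'"
  obtain a b c a' b' c' where tt: "t = (a, b, c)" "t' = (a', b', c')"
    using prod_cases3 by metis
  from iso obtain z w where "z \<noteq> 0" "w \<noteq> 0" "c = c'" "a * w = a' * z" "b * z = b' * w"
    unfolding tt by (rule modular_iso_invariants)
  with t t' have "a = a'" "b = b'"
    unfolding tt by (auto intro: canonical_list_unique)
  with \<open>c = c'\<close> \<open>t \<noteq> t'\<close> show False
    by (simp add: tt)
qed

end
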